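(* Let $m,n\ge0$, $0\le k\le\min(m,n)$, and let $i,j$ be integers with $0\le i\le m$, $0\le j\le n$, $k\le i+j\le m+n-k$. Then $$\binom{m-k+j}{m-k}\,c_{m,\,n-k+i,\,i}(k,\ i+j-k)=\binom{m-k+j}{m-i}\,c_{m,n,k}(i,j).$$
   Context: Binomial coefficients $\binom{a}{b}$ equal $\frac{a!}{b!(a-b)!}$ when $0\le b\le a$ and $0$ otherwise. Let $e,f,h$ be the standard basis of $\mathfrak{sl}(2,\mathbb{C})$. $V(n)$ is the irreducible representation of highest weight $n$ with fixed highest weight vector $\phi_n$; $\{f^i\phi_n\}_{0\le i\le n}$ is a basis, $f^{n+1}\phi_n=0$. $\mathfrak{sl}(2)$ acts on $V(m)\otimes V(n)$ by $X(v\otimes w)=Xv\otimes w+v\otimes Xw$. For any $m,n\ge 0$ and $0\le k\le\min(m,n)$, $\phi_{m,n,k}=\sum_{l=0}^{k}(-1)^l\binom{m-l}{k-l}\binom{n-k+l}{l} f^l\phi_m\otimes f^{k-l}\phi_n\in V(m)\otimes V(n)$ (a highest weight vector of weight $m+n-2k$). The coordinates $c_{m,n,k}(i,j)$ are defined by $f^{p-k}\phi_{m,n,k}=\sum_{i+j=p,\,0\le i\le m,\,0\le j\le n} c_{m,n,k}(i,j)\, f^i\phi_m\otimes f^j\phi_n$ for $k\le p\le m+n-k$. *)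

theory Defs
  imports Complex_Main
begin

text \<open>Model of V(m) \<otimes> V(n): a vector is given by its coordinates v (i,j) with respect to the
basis f^i phi_m \<otimes> f^j phi_n, 0 \<le> i \<le> m, 0 \<le> j \<le> n (coordinates outside this range are 0).\<close>

type_synonym tvec = "nat \<times> nat \<Rightarrow> complex"

text \<open>Action of f on V(m) \<otimes> V(n): f(f^a phi_m \<otimes> f^b phi_n) = f^(a+1) phi_m \<otimes> f^b phi_n
 + f^a phi_m \<otimes> f^(b+1) phi_n, with f^(m+1) phi_m = 0 and f^(n+1) phi_n = 0.\<close>

definition f_act :: "nat \<Rightarrow> nat \<Rightarrow> tvec \<Rightarrow> tvec" where
  "f_act m n v = (\<lambda>(i, j). if i \<le> m \<and> j \<le> n
      then (if 0 < i then v (i - 1, j) else 0) + (if 0 < j then v (i, j - 1) else 0)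
      else 0)"

definition phi :: "nat \<Rightarrow> nat \<Rightarrow> nat \<Rightarrow> tvec" where
  "phi m n k = (\<lambda>(i, j). if i \<le> k \<and> j = k - i \<and> i \<le> m \<and> j \<le> n
      then (-1) ^ i * of_nat ((m - i) choose (k - i)) * of_nat ((n - k + i) choose i)
      else 0)"

definition cc :: "nat \<Rightarrow> nat \<Rightarrow> nat \<Rightarrow> nat \<Rightarrow> nat \<Rightarrow> complex" where
  "cc m n k i j = ((f_act m n) ^^ (i + j - k)) (phi m n k) (i, j)"

end

theory Submission imports Defs begin

text \<open>Iterating f on a vector supported in the box [0,m] \<times> [0,n] gives the binomial convolution
  (f^r v)(i,j) = \<Sum>s C(r,s) v(i-s, j-(r-s)), so c_{m,n,k}(i,j) is an explicit alternating sum over the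
  terms of \<phi>_{m,n,k}. For both sides of the identity these sums run over the same index l, and
  termwise the claim reduces to a rearrangement of trinomial coefficients: with
  a = m-i, b = i-l, c = k-l, d = j+l-k, e = m-k both products equal (a+b+d)! (a+b)! / (a! b! c! d! e!).\<close>

lemma binomial_sum_Suc:
  fixes h :: "nat \<Rightarrow> 'a::comm_semiring_1"
  shows "(\<Sum>s\<le>Suc r. of_nat (Suc r choose s) * h s)
       = (\<Sum>s\<le>r. of_nat (r choose s) * h s) + (\<Sum>s\<le>r. of_nat (r choose s) * h (Suc s))"
proof -
  have "(\<Sum>s\<le>Suc r. of_nat (Suc r choose s) * h s)
      = h 0 + (\<Sum>s\<le>r. of_nat (r choose Suc s) * h (Suc s)) + (\<Sum>s\<le>r. of_nat (r choose s) * h (Suc s))"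
    by (subst sum.atMost_Suc_shift) (simp add: sum.distrib algebra_simps)
  also have "h 0 + (\<Sum>s\<le>r. of_nat (r choose Suc s) * h (Suc s)) = (\<Sum>s\<le>Suc r. of_nat (r choose s) * h s)"
    by (subst sum.atMost_Suc_shift) simp
  also have "\<dots> = (\<Sum>s\<le>r. of_nat (r choose s) * h s)"
    by (simp add: binomial_eq_0)
  finally show ?thesis .
qed

lemma f_act_apply:
  assumes "i \<le> m" "j \<le> n"
  shows "f_act m n v (i, j) = (if 0 < i then v (i - 1, j) else 0) + (if 0 < j then v (i, j - 1) else 0)"
  using assms by (simp add: f_act_def)

lemma funpow_f_act_apply:
  assumes supp: "\<And>a b. m < a \<or> n < b \<Longrightarrow> v (a, b) = 0"
  shows "(f_act m n ^^ r) v (i, j) = (if i \<le> m \<and> j \<le> n then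
     (\<Sum>s\<le>r. of_nat (r choose s) * (if s \<le> i \<and> r - s \<le> j then v (i - s, j - (r - s)) else 0)) else 0)"
proof (induction r arbitrary: i j)
  case 0
  then show ?case using supp by auto
next
  case (Suc r)
  define h where "h = (\<lambda>s. if s \<le> i \<and> Suc r - s \<le> j then v (i - s, j - (Suc r - s)) else 0)"
  show ?case
  proof (cases "i \<le> m \<and> j \<le> n")
    case False
    then show ?thesis by (auto simp: f_act_def)
  next
    case True
    have left: "(if 0 < i then (f_act m n ^^ r) v (i - 1, j) else 0)
        = (\<Sum>s\<le>r. of_nat (r choose s) * h (Suc s))"
      using True by (auto simp: Suc.IH h_def intro!: sum.cong)
    have down: "(if 0 < j then (f_act m n ^^ r) v (i, j - 1) else 0)
        = (\<Sum>s\<le>r. of_nat (r choose s) * h s)"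
    proof (cases "j = 0")
      case True
      then have "of_nat (r choose s) * h s = 0" if "s \<le> r" for s
        using that by (auto simp: h_def)
      then show ?thesis using True by simp
    next
      case False
      then show ?thesis using True by (auto simp: Suc.IH h_def intro!: sum.cong)
    qed
    have "(f_act m n ^^ Suc r) v (i, j)
        = (if 0 < i then (f_act m n ^^ r) v (i - 1, j) else 0)
          + (if 0 < j then (f_act m n ^^ r) v (i, j - 1) else 0)"
      using True by (simp add: f_act_apply)
    also have "\<dots> = (\<Sum>s\<le>r. of_nat (r choose s) * h s) + (\<Sum>s\<le>r. of_nat (r choose s) * h (Suc s))"
      by (simp add: left down)
    also have "\<dots> = (\<Sum>s\<le>Suc r. of_nat (Suc r choose s) * h s)"
      by (rule binomial_sum_Suc[symmetric])
    finally show ?thesis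
      using True by (simp add: h_def)
  qed
qed

lemma cc_eq_sum:
  assumes "k \<le> m" "k \<le> n" "k \<le> i + j" "i \<le> m" "j \<le> n"
  shows "cc m n k i j = (\<Sum>l | l \<le> k \<and> l \<le> i \<and> k - l \<le> j.
           (-1) ^ l * of_nat ((m - l) choose (k - l)) * of_nat ((n - k + l) choose l)
           * of_nat ((i + j - k) choose (i - l)))"
proof -
  define r where "r = i + j - k"
  define G where "G = (\<lambda>s. of_nat (r choose s) * ((-1) ^ (i - s) * of_nat ((m - (i - s)) choose (k - (i - s)))
           * of_nat ((n - k + (i - s)) choose (i - s))) :: complex)"
  have supp: "\<And>a b. m < a \<or> n < b \<Longrightarrow> phi m n k (a, b) = 0"
    by (auto simp: phi_def)
  have "cc m n k i j = (\<Sum>s\<le>r. of_nat (r choose s)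
          * (if s \<le> i \<and> r - s \<le> j then phi m n k (i - s, j - (r - s)) else 0))"
    unfolding cc_def r_def[symmetric]
    using assms by (simp add: funpow_f_act_apply[of m n "phi m n k", OF supp])
  also have "\<dots> = (\<Sum>s\<le>r. if s \<le> i \<and> r - s \<le> j \<and> i - s \<le> k then G s else 0)"
    using assms by (intro sum.cong) (auto simp: phi_def G_def r_def add.commute)
  also have "\<dots> = (\<Sum>s\<in>{s\<in>{..r}. s \<le> i \<and> r - s \<le> j \<and> i - s \<le> k}. G s)"
    by (rule sum.inter_filter[symmetric]) simp
  also have "\<dots> = (\<Sum>l | l \<le> k \<and> l \<le> i \<and> k - l \<le> j.
           (-1) ^ l * of_nat ((m - l) choose (k - l)) * of_nat ((n - k + l) choose l)
           * of_nat ((i + j - k) choose (i - l)))"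
    using assms by (intro sum.reindex_bij_witness[where i="\<lambda>l. i - l" and j="\<lambda>s. i - s"])
      (auto simp: G_def r_def add.commute)
  finally show ?thesis .
qed

lemma choose_product_rearrange:
  fixes a b c d e :: nat
  assumes "a + b = e + c"
  shows "((e + c + d) choose e) * ((a + b) choose b) * ((c + d) choose c)
       = ((a + b + d) choose a) * ((e + c) choose c) * ((b + d) choose b)"
proof -
  have choose_eq: "real ((x + y) choose y) = fact (x + y) / (fact x * fact y)" for x y
    by (simp add: binomial_fact)
  have lhs: "real (((e + c + d) choose e) * ((a + b) choose b) * ((c + d) choose c))
      = fact (e + c + d) * fact (a + b) / (fact a * fact b * fact c * fact d * fact e)"
    using choose_eq[of "c + d" e] choose_eq[of a b] choose_eq[of d c]
    by (simp add: ac_simps)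
  have rhs: "real (((a + b + d) choose a) * ((e + c) choose c) * ((b + d) choose b))
      = fact (a + b + d) * fact (e + c) / (fact a * fact b * fact c * fact d * fact e)"
    using choose_eq[of "b + d" a] choose_eq[of e c] choose_eq[of d b]
    by (simp add: ac_simps)
  have "real (((e + c + d) choose e) * ((a + b) choose b) * ((c + d) choose c))
      = real (((a + b + d) choose a) * ((e + c) choose c) * ((b + d) choose b))"
    unfolding lhs rhs by (simp only: assms)
  then show ?thesis
    by (simp only: of_nat_eq_iff)
qed

lemma cc_shifted_eq_sum:
  assumes "k \<le> m" "i \<le> m" "j \<le> n" "k \<le> i + j"
  shows "cc m (n - k + i) i k (i + j - k) = (\<Sum>l | l \<le> k \<and> l \<le> i \<and> k - l \<le> j.
           (-1) ^ l * of_nat ((m - l) choose (i - l)) * of_nat ((n - k + l) choose l)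
           * of_nat (j choose (k - l)))"
proof -
  have index_set: "{l. l \<le> i \<and> l \<le> k \<and> i - l \<le> i + j - k} = {l. l \<le> k \<and> l \<le> i \<and> k - l \<le> j}"
    using assms by auto
  show ?thesis
    using assms by (subst cc_eq_sum) (auto simp: index_set intro!: sum.cong)
qed

theorem proposition8p2:
  fixes m n k i j :: nat
  assumes "k \<le> min m n" and "i \<le> m" and "j \<le> n"
    and "k \<le> i + j" and "i + j \<le> m + n - k"
  shows "of_nat ((m - k + j) choose (m - k)) * cc m (n - k + i) i k (i + j - k)
       = of_nat ((m - k + j) choose (m - i)) * cc m n k i j"
proof -
  have termwise: "of_nat ((m - k + j) choose (m - k)) * of_nat ((m - l) choose (i - l)) * of_nat (j choose (k - l))
      = (of_nat ((m - k + j) choose (m - i)) * of_nat ((m - l) choose (k - l))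
          * of_nat ((i + j - k) choose (i - l)) :: complex)"
    if "l \<le> k" "l \<le> i" "k - l \<le> j" for l
    using choose_product_rearrange[of "m - i" "i - l" "m - k" "k - l" "j + l - k"] that assms
    by (simp flip: of_nat_mult)
  have "of_nat ((m - k + j) choose (m - k)) * cc m (n - k + i) i k (i + j - k)
      = (\<Sum>l | l \<le> k \<and> l \<le> i \<and> k - l \<le> j. (-1) ^ l * of_nat ((n - k + l) choose l)
          * (of_nat ((m - k + j) choose (m - k)) * of_nat ((m - l) choose (i - l)) * of_nat (j choose (k - l))))"
    using assms by (subst cc_shifted_eq_sum) (simp_all add: sum_distrib_left mult_ac)
  also have "\<dots> = (\<Sum>l | l \<le> k \<and> l \<le> i \<and> k - l \<le> j. (-1) ^ l * of_nat ((n - k + l) choose l)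
          * (of_nat ((m - k + j) choose (m - i)) * of_nat ((m - l) choose (k - l))
             * of_nat ((i + j - k) choose (i - l))))"
    by (rule sum.cong) (simp_all add: termwise)
  also have "\<dots> = of_nat ((m - k + j) choose (m - i)) * cc m n k i j"
    using assms by (simp add: cc_eq_sum sum_distrib_left mult_ac)
  finally show ?thesis .
qed

end
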